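(* Let $n\geq1$ and $A\in M_n(\mathbb Z)$ with $\det(A)\neq0$. Then there exist integers $n_1,n_2\geq0$ with $n_1+n_2=n$, a matrix $A_1\in M_{n_1}(\mathbb Z)$ all of whose eigenvalues are roots of unity, a positive matrix $A_2\in M_{n_2}(\mathbb Z)$, and $P\in M_n(\mathbb Z)$ with $\det(P)\neq0$ such that $\varphi_A\circ\varphi_P=\varphi_P\circ g$, where $g:\mathbb G_m^n=\mathbb G_m^{n_1}\times\mathbb G_m^{n_2}\to\mathbb G_m^{n_1}\times\mathbb G_m^{n_2}$ is $g(u_1,u_2)=(\varphi_{A_1}(u_1),\varphi_{A_2}(u_2))$.
   Context: Work over an algebraically closed field of characteristic zero. For $A=(a_{ij})\in M_n(\mathbb Z)$, $\varphi_A:\mathbb G_m^n\to\mathbb G_m^n$ is the group endomorphism $(u_1,\dots,u_n)\mapsto(u_1^{a_{11}}\cdots u_n^{a_{1n}},\dots,u_1^{a_{n1}}\cdots u_n^{a_{nn}})$. A matrix $A$ is positive if every eigenvalue of $A$ is neither $0$ nor a root of unity. *)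

theory Defs
  imports Complex_Main "HOL-Computational_Algebra.Polynomial" "Jordan_Normal_Form.Char_Poly"
begin

definition Gm :: "nat \<Rightarrow> 'k::field vec set" where
  "Gm n = {u \<in> carrier_vec n. \<forall>i<n. u $ i \<noteq> 0}"

definition phi :: "int mat \<Rightarrow> 'k::field vec \<Rightarrow> 'k vec" where
  "phi A u = vec (dim_row A) (\<lambda>i. \<Prod>j<dim_col A. (u $ j) powi (A $$ (i, j)))"

definition root_of_unity :: "complex \<Rightarrow> bool" where
  "root_of_unity z \<longleftrightarrow> (\<exists>m::nat. m > 0 \<and> z ^ m = 1)"

definition int_eigenvalue :: "int mat \<Rightarrow> complex \<Rightarrow> bool" where
  "int_eigenvalue A z \<longleftrightarrow> eigenvalue (map_mat complex_of_int A) z"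

definition positive_mat :: "int mat \<Rightarrow> bool" where
  "positive_mat A \<longleftrightarrow> (\<forall>z. int_eigenvalue A z \<longrightarrow> z \<noteq> 0 \<and> \<not> root_of_unity z)"

end

theory Submission
  imports Defs "HOL-Computational_Algebra.Polynomial_Factorial" "HOL-Computational_Algebra.Field_as_Ring"
begin

text \<open>Over \<open>\<rat>\<close> the matrix \<open>A\<close> is annihilated by some nonzero polynomial \<open>p\<close>. Let \<open>N\<close> be a
  common order of the roots of unity among the complex roots of \<open>p\<close>, and split \<open>p = f g\<close> with
  \<open>f\<close> dividing a power of \<open>X ^ N - 1\<close> and \<open>g\<close> coprime to \<open>X ^ N - 1\<close>. Then \<open>\<rat> ^ n\<close> is the
  direct sum of the kernels of \<open>f(A)\<close> and \<open>g(A)\<close>. Their integer points form \<open>A\<close>-invariant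
  lattices, whose \<open>\<int>\<close>-bases \<open>B\<^sub>1\<close>, \<open>B\<^sub>2\<close> satisfy \<open>A B\<^sub>i = B\<^sub>i A\<^sub>i\<close> with integer
  matrices \<open>A\<^sub>i\<close>, and \<open>P = [B\<^sub>1 | B\<^sub>2]\<close> is nonsingular with \<open>A P = P diag(A\<^sub>1, A\<^sub>2)\<close>.
  The eigenvalues of \<open>A\<^sub>1\<close> are roots of \<open>f\<close>, hence roots of unity; those of \<open>A\<^sub>2\<close> are roots
  of \<open>g\<close>, hence not roots of unity, and nonzero since \<open>det A \<noteq> 0\<close>. Finally
  \<open>phi\<^sub>A \<circ> phi\<^sub>P = phi\<^sub>A\<^sub>P\<close>, and \<open>phi\<close> of a block diagonal matrix acts blockwise.\<close>


section \<open>Polynomials evaluated at square matrices\<close>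

definition poly_mat :: "'a::comm_ring_1 poly \<Rightarrow> 'a mat \<Rightarrow> 'a mat" where
  "poly_mat p A = fold_coeffs (\<lambda>c M. c \<cdot>\<^sub>m 1\<^sub>m (dim_row A) + A * M) p (0\<^sub>m (dim_row A) (dim_row A))"

lemma poly_mat_0 [simp]: "poly_mat 0 A = 0\<^sub>m (dim_row A) (dim_row A)"
  by (simp add: poly_mat_def)

lemma poly_mat_pCons:
  assumes A: "A \<in> carrier_mat n n"
  shows "poly_mat (pCons a p) A = a \<cdot>\<^sub>m 1\<^sub>m n + A * poly_mat p A"
proof (cases "p = 0 \<and> a = 0")
  case True
  then show ?thesis using A by (auto simp: poly_mat_def)
next
  case False
  then have "coeffs (pCons a p) = a # coeffs p" by auto
  then show ?thesis using A by (simp add: poly_mat_def fold_coeffs_def)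
qed

lemma poly_mat_carrier [simp]:
  assumes A: "A \<in> carrier_mat n n"
  shows "poly_mat p A \<in> carrier_mat n n"
  by (induct p) (use A in \<open>simp_all add: poly_mat_pCons[OF A]\<close>)

lemma poly_mat_dims [simp]:
  assumes "A \<in> carrier_mat n n"
  shows "dim_row (poly_mat p A) = n" "dim_col (poly_mat p A) = n"
  using poly_mat_carrier[OF assms] by auto

lemma poly_mat_add:
  assumes A: "A \<in> carrier_mat n n"
  shows "poly_mat (p + q) A = poly_mat p A + poly_mat q A"
proof (induct p q rule: poly_induct2)
  case 0
  then show ?case using A by simp
next
  case (pCons a p b q)
  have c: "poly_mat p A \<in> carrier_mat n n" "poly_mat q A \<in> carrier_mat n n" using A by auto
  have "poly_mat (pCons a p + pCons b q) A = (a + b) \<cdot>\<^sub>m 1\<^sub>m n + A * (poly_mat p A + poly_mat q A)"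
    using pCons by (simp add: poly_mat_pCons[OF A])
  also have "\<dots> = (a \<cdot>\<^sub>m 1\<^sub>m n + A * poly_mat p A) + (b \<cdot>\<^sub>m 1\<^sub>m n + A * poly_mat q A)"
    using A c by (intro eq_matI) (auto simp: scalar_prod_def sum.distrib distrib_left distrib_right)
  finally show ?case by (simp add: poly_mat_pCons[OF A])
qed

lemma poly_mat_smult:
  assumes A: "A \<in> carrier_mat n n"
  shows "poly_mat (Polynomial.smult c p) A = c \<cdot>\<^sub>m poly_mat p A"
proof (induct p)
  case 0
  then show ?case using A by (auto intro!: eq_matI)
next
  case (pCons a p)
  have "poly_mat p A \<in> carrier_mat n n" using A by auto
  with pCons A show ?case
    by (simp add: poly_mat_pCons[OF A])
      (intro eq_matI, auto simp: scalar_prod_def sum_distrib_left distrib_left mult.left_commute)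
qed

lemma poly_mat_mult:
  assumes A: "A \<in> carrier_mat n n"
  shows "poly_mat (p * q) A = poly_mat p A * poly_mat q A"
proof (induct p)
  case 0
  then show ?case using A by (auto intro!: eq_matI simp: scalar_prod_def)
next
  case (pCons a p)
  have P: "poly_mat p A \<in> carrier_mat n n" and Q: "poly_mat q A \<in> carrier_mat n n" using A by auto
  have "pCons a p * q = Polynomial.smult a q + pCons 0 (p * q)" by simp
  then have "poly_mat (pCons a p * q) A = a \<cdot>\<^sub>m poly_mat q A + A * poly_mat (p * q) A"
    using A by (simp add: poly_mat_add[OF A] poly_mat_smult[OF A] poly_mat_pCons[OF A])
      (intro eq_matI, auto)
  also have "\<dots> = (a \<cdot>\<^sub>m 1\<^sub>m n) * poly_mat q A + A * poly_mat p A * poly_mat q A"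
    using A P Q pCons by (simp add: mult_smult_assoc_mat[of _ n n _ n] assoc_mult_mat[of _ n n _ n _ n])
  also have "\<dots> = poly_mat (pCons a p) A * poly_mat q A"
    using A P Q by (simp add: poly_mat_pCons[OF A] add_mult_distrib_mat[of _ n n _ _ n])
  finally show ?case .
qed

lemma poly_mat_1:
  assumes A: "A \<in> carrier_mat n n"
  shows "poly_mat 1 A = 1\<^sub>m n"
  using A by (simp add: one_pCons poly_mat_pCons[OF A]) (intro eq_matI, auto)

lemma pow_mat_commute:
  assumes A: "A \<in> carrier_mat n n"
  shows "A * A ^\<^sub>m k = A ^\<^sub>m k * A"
proof (induct k)
  case 0
  then show ?case using A by simp
next
  case (Suc k)
  have "A * A ^\<^sub>m Suc k = (A * A ^\<^sub>m k) * A" using A by (simp add: assoc_mult_mat[of _ n n _ n _ n])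
  also have "\<dots> = A ^\<^sub>m Suc k * A" using Suc by simp
  finally show ?case .
qed

lemma poly_mat_monom:
  assumes A: "A \<in> carrier_mat n n"
  shows "poly_mat (monom a k) A = a \<cdot>\<^sub>m A ^\<^sub>m k"
proof (induct k)
  case 0
  then show ?case using A by (simp add: monom_0 poly_mat_pCons[OF A])
next
  case (Suc k)
  have P: "A ^\<^sub>m k \<in> carrier_mat n n" using A by simp
  have "poly_mat (monom a (Suc k)) A = 0 \<cdot>\<^sub>m 1\<^sub>m n + A * (a \<cdot>\<^sub>m A ^\<^sub>m k)"
    using Suc by (simp add: monom_Suc poly_mat_pCons[OF A])
  also have "A * (a \<cdot>\<^sub>m A ^\<^sub>m k) = a \<cdot>\<^sub>m A ^\<^sub>m Suc k"
    using mult_smult_distrib[OF A P] pow_mat_commute[OF A] by simp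
  also have "0 \<cdot>\<^sub>m 1\<^sub>m n + a \<cdot>\<^sub>m A ^\<^sub>m Suc k = a \<cdot>\<^sub>m A ^\<^sub>m Suc k"
    by (intro eq_matI) (simp_all add: carrier_matD[OF A])
  finally show ?case .
qed

lemma poly_mat_eq_0_dvd:
  assumes A: "A \<in> carrier_mat n n" and p: "poly_mat p A = 0\<^sub>m n n" and "p dvd q"
  shows "poly_mat q A = 0\<^sub>m n n"
proof -
  obtain t where "q = p * t" using \<open>p dvd q\<close> by (auto elim: dvdE)
  then show ?thesis using A p poly_mat_carrier[OF A, of t] by (simp add: poly_mat_mult[OF A])
qed

lemma poly_mat_intertwine:
  assumes A: "A \<in> carrier_mat n n" and B: "B \<in> carrier_mat n d" and C: "C \<in> carrier_mat d d"
    and AB: "A * B = B * C"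
  shows "poly_mat p A * B = B * poly_mat p C"
proof (induct p)
  case 0
  then show ?case using A B C by (auto intro!: eq_matI simp: scalar_prod_def)
next
  case (pCons a p)
  have P: "poly_mat p A \<in> carrier_mat n n" and Q: "poly_mat p C \<in> carrier_mat d d" using A C by auto
  have "poly_mat (pCons a p) A * B = a \<cdot>\<^sub>m B + A * (poly_mat p A * B)"
    using A B P by (simp add: poly_mat_pCons[OF A] add_mult_distrib_mat[of _ n n _ _ d]
        assoc_mult_mat[of _ n n _ n _ d] mult_smult_assoc_mat[of _ n n _ d])
  also have "\<dots> = a \<cdot>\<^sub>m B + (A * B) * poly_mat p C"
    using A B Q pCons by (simp add: assoc_mult_mat[of _ n n _ d _ d])
  also have "\<dots> = B * poly_mat (pCons a p) C"
    using B C Q AB by (simp add: poly_mat_pCons[OF C] mult_add_distrib_mat[of _ n d _ d]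
        assoc_mult_mat[of _ n d _ d _ d] mult_smult_distrib[of _ n d _ d])
  finally show ?case .
qed

lemma poly_mat_commute:
  assumes A: "A \<in> carrier_mat n n"
  shows "poly_mat p A * A = A * poly_mat p A"
  by (rule poly_mat_intertwine[OF A A A refl])

lemma mult_mat_vec_smult:
  assumes "(A :: 'a::comm_ring_1 mat) \<in> carrier_mat m n" and "v \<in> carrier_vec n"
  shows "A *\<^sub>v (k \<cdot>\<^sub>v v) = k \<cdot>\<^sub>v (A *\<^sub>v v)"
  using assms by (intro eq_vecI) (auto simp: scalar_prod_def sum_distrib_left mult.left_commute)

lemma smult_one_mat_mult_vec:
  assumes x: "x \<in> carrier_vec n"
  shows "(a \<cdot>\<^sub>m 1\<^sub>m n) *\<^sub>v x = (a::'a::comm_ring_1) \<cdot>\<^sub>v x"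
proof (intro eq_vecI)
  fix i assume i: "i < dim_vec (a \<cdot>\<^sub>v x)"
  have "((a \<cdot>\<^sub>m 1\<^sub>m n) *\<^sub>v x) $ i = (\<Sum>j \<in> {0..<n}. a * (if j = i then 1 else 0) * x $ j)"
    using x i by (auto simp: scalar_prod_def intro!: sum.cong)
  also have "\<dots> = (\<Sum>j \<in> {0..<n}. if i = j then a * x $ j else 0)"
    by (rule sum.cong) auto
  also have "\<dots> = a * x $ i" using i x by (simp add: sum.delta)
  finally show "((a \<cdot>\<^sub>m 1\<^sub>m n) *\<^sub>v x) $ i = (a \<cdot>\<^sub>v x) $ i" using i by simp
qed (use x in simp)

lemma poly_mat_eigenvector:
  assumes A: "A \<in> carrier_mat n n" and x: "x \<in> carrier_vec n" and Ax: "A *\<^sub>v x = l \<cdot>\<^sub>v x"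
  shows "poly_mat p A *\<^sub>v x = poly p l \<cdot>\<^sub>v x"
proof (induct p)
  case 0
  then show ?case using A x by (auto intro!: eq_vecI simp: scalar_prod_def)
next
  case (pCons a p)
  have P: "poly_mat p A \<in> carrier_mat n n" using A by auto
  have "poly_mat (pCons a p) A *\<^sub>v x = (a \<cdot>\<^sub>m 1\<^sub>m n) *\<^sub>v x + A *\<^sub>v (poly p l \<cdot>\<^sub>v x)"
    using A x P pCons
    by (simp add: poly_mat_pCons[OF A] add_mult_distrib_mat_vec[of _ n n] assoc_mult_mat_vec[of _ n n _ n])
  also have "\<dots> = a \<cdot>\<^sub>v x + poly p l \<cdot>\<^sub>v (l \<cdot>\<^sub>v x)"
    using A x Ax by (simp add: smult_one_mat_mult_vec mult_mat_vec_smult[OF A x])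
  also have "\<dots> = poly (pCons a p) l \<cdot>\<^sub>v x"
    by (intro eq_vecI) (auto simp: algebra_simps)
  finally show ?case .
qed

lemma poly_mat_eq_0_eigenvalue_root:
  fixes A :: "'a::idom mat"
  assumes A: "A \<in> carrier_mat n n" and p: "poly_mat p A = 0\<^sub>m n n" and "eigenvalue A l"
  shows "poly p l = 0"
proof -
  obtain x where x: "x \<in> carrier_vec n" "x \<noteq> 0\<^sub>v n" and Ax: "A *\<^sub>v x = l \<cdot>\<^sub>v x"
    using \<open>eigenvalue A l\<close> A unfolding eigenvalue_def eigenvector_def by auto
  have "poly p l \<cdot>\<^sub>v x = poly_mat p A *\<^sub>v x" by (rule poly_mat_eigenvector[OF A x(1) Ax, symmetric])
  also have "\<dots> = 0\<^sub>v n" unfolding p using x(1) by (intro eq_vecI) auto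
  finally have px: "poly p l \<cdot>\<^sub>v x = 0\<^sub>v n" .
  obtain i where i: "i < n" "x $ i \<noteq> 0" using x by force
  have "poly p l * x $ i = (poly p l \<cdot>\<^sub>v x) $ i" using x(1) i(1) by simp
  also have "\<dots> = 0" using px i(1) by simp
  finally show ?thesis using i(2) by simp
qed

lemma (in comm_ring_hom) poly_mat_hom:
  assumes A: "A \<in> carrier_mat n n"
  shows "mat\<^sub>h (poly_mat p A) = poly_mat (map_poly hom p) (mat\<^sub>h A)"
proof (induct p)
  case 0
  then show ?case using A by (auto intro!: eq_matI)
next
  case (pCons a p)
  have P: "poly_mat p A \<in> carrier_mat n n" using A by auto
  have "mat\<^sub>h (poly_mat (pCons a p) A) = mat\<^sub>h (a \<cdot>\<^sub>m 1\<^sub>m n) + mat\<^sub>h (A * poly_mat p A)"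
    using A P by (simp add: poly_mat_pCons[OF A]) (intro eq_matI, auto simp: hom_add)
  also have "\<dots> = hom a \<cdot>\<^sub>m 1\<^sub>m n + mat\<^sub>h A * poly_mat (map_poly hom p) (mat\<^sub>h A)"
    using A P pCons by (simp add: mat_hom_mult[OF A P]) (intro eq_matI, auto)
  also have "\<dots> = poly_mat (map_poly hom (pCons a p)) (mat\<^sub>h A)"
    using A by (simp add: map_poly_pCons_hom poly_mat_pCons[of "mat\<^sub>h A" n])
  finally show ?case .
qed


section \<open>Homogeneous linear systems over integral domains\<close>

lemma mat_kernel_nontrivial:
  fixes B :: "'a::idom mat"
  assumes B: "B \<in> carrier_mat n m" and "n < m"
  shows "\<exists>y \<in> carrier_vec m. y \<noteq> 0\<^sub>v m \<and> B *\<^sub>v y = 0\<^sub>v n"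
proof -
  define B' where "B' = mat m m (\<lambda>(i,j). if i < n then B $$ (i,j) else 0)"
  have B': "B' \<in> carrier_mat m m" by (simp add: B'_def)
  have "B' = mat\<^sub>r m m (\<lambda>i. if i = m - 1 then 0\<^sub>v m else row B' i)"
    using B' \<open>n < m\<close> by (intro eq_matI) (auto simp: B'_def)
  also have "det \<dots> = 0"
    using \<open>n < m\<close> B' by (intro det_row_0) auto
  finally have "det B' = 0" .
  then obtain y where y: "y \<in> carrier_vec m" "y \<noteq> 0\<^sub>v m" "B' *\<^sub>v y = 0\<^sub>v m"
    using det_0_iff_vec_prod_zero[OF B'] by auto
  have "B *\<^sub>v y = 0\<^sub>v n"
  proof (intro eq_vecI)
    fix i assume "i < dim_vec (0\<^sub>v n :: 'a vec)"
    then have i: "i < n" by simp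
    have "row B i = row B' i" using B i \<open>n < m\<close> by (intro eq_vecI) (auto simp: B'_def)
    then have "(B *\<^sub>v y) $ i = (B' *\<^sub>v y) $ i" using B B' i \<open>n < m\<close> by simp
    then show "(B *\<^sub>v y) $ i = 0\<^sub>v n $ i" using y(3) i \<open>n < m\<close> by simp
  qed (use B in simp)
  with y show ?thesis by blast
qed

lemma injective_mat_dim_le:
  fixes B :: "'a::idom mat"
  assumes B: "B \<in> carrier_mat n m" and inj: "\<forall>y \<in> carrier_vec m. B *\<^sub>v y = 0\<^sub>v n \<longrightarrow> y = 0\<^sub>v m"
  shows "m \<le> n"
  using mat_kernel_nontrivial[OF B] inj by (meson not_le)

lemma scaled_surjective_mat_dim_le:
  fixes B :: "'a::idom mat"
  assumes B: "B \<in> carrier_mat n m"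
    and surj: "\<And>i. i < n \<Longrightarrow> \<exists>c y. c \<noteq> 0 \<and> y \<in> carrier_vec m \<and> B *\<^sub>v y = c \<cdot>\<^sub>v unit_vec n i"
  shows "n \<le> m"
proof (rule injective_mat_dim_le)
  show BT: "transpose_mat B \<in> carrier_mat m n" using B by simp
  show "\<forall>z \<in> carrier_vec n. transpose_mat B *\<^sub>v z = 0\<^sub>v m \<longrightarrow> z = 0\<^sub>v n"
  proof (intro ballI impI eq_vecI)
    fix z i assume z: "z \<in> carrier_vec n" and Bz: "transpose_mat B *\<^sub>v z = 0\<^sub>v m"
      and "i < dim_vec (0\<^sub>v n :: 'a vec)"
    then have i: "i < n" by simp
    obtain c y where c: "c \<noteq> 0" and y: "y \<in> carrier_vec m" and By: "B *\<^sub>v y = c \<cdot>\<^sub>v unit_vec n i"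
      using surj[OF i] by blast
    have "c * z $ i = z \<bullet> (B *\<^sub>v y)"
      using z i by (simp add: By scalar_prod_smult_distrib scalar_prod_right_unit)
    also have "\<dots> = (transpose_mat B *\<^sub>v z) \<bullet> y"
      by (rule transpose_vec_mult_scalar[OF B y z, symmetric])
    also have "\<dots> = 0" using Bz y by simp
    finally show "z $ i = 0\<^sub>v n $ i" using c i by simp
  qed (use B in simp)
qed

lemma poly_mat_annihilator_exists:
  fixes A :: "'a::field mat"
  assumes A: "A \<in> carrier_mat n n"
  shows "\<exists>p. p \<noteq> 0 \<and> poly_mat p A = 0\<^sub>m n n"
proof -
  define M where "M = Suc (n * n)"
  txt \<open>Column \<open>k\<close> of \<open>W\<close> lists the entries of \<open>A ^ k\<close>, so a kernel vector of \<open>W\<close> is a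
    linear dependence among the powers \<open>A ^ 0, \<dots>, A ^ (n * n)\<close>.\<close>
  define W where "W = mat (n * n) M (\<lambda>(r,k). (A ^\<^sub>m k) $$ (r div n, r mod n))"
  obtain c where c: "c \<in> carrier_vec M" "c \<noteq> 0\<^sub>v M" "W *\<^sub>v c = 0\<^sub>v (n * n)"
    using mat_kernel_nontrivial[of W "n * n" M] by (auto simp: W_def M_def)
  define p where "p = (\<Sum>k<M. monom (c $ k) k)"
  obtain k where k: "k < M" "c $ k \<noteq> 0" using c(1,2) by force
  then have "coeff p k \<noteq> 0" by (simp add: p_def coeff_sum coeff_monom)
  then have "p \<noteq> 0" by auto
  moreover have "poly_mat p A = 0\<^sub>m n n"
  proof (intro eq_matI)
    fix i j assume "i < dim_row (0\<^sub>m n n :: 'a mat)" "j < dim_col (0\<^sub>m n n :: 'a mat)"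
    then have i: "i < n" and j: "j < n" by auto
    have "i * n + j < Suc i * n" using j by simp
    also have "\<dots> \<le> n * n" using i by (intro mult_le_mono1) simp
    finally have r: "i * n + j < n * n" .
    have sum: "poly_mat (\<Sum>k<K. monom (c $ k) k) A $$ (i, j) = (\<Sum>k<K. c $ k * (A ^\<^sub>m k) $$ (i,j))" for K
      by (induct K) (use A i j in \<open>simp_all add: poly_mat_add[OF A] poly_mat_monom[OF A]\<close>)
    have "(W *\<^sub>v c) $ (i * n + j) = (\<Sum>k<M. c $ k * (A ^\<^sub>m k) $$ (i,j))"
      using c(1) r j by (simp add: W_def scalar_prod_def lessThan_atLeast0 mult.commute)
    then show "poly_mat p A $$ (i, j) = 0\<^sub>m n n $$ (i, j)"
      using c(3) r i j by (simp add: p_def sum)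
  qed (use A in auto)
  ultimately show ?thesis by blast
qed


section \<open>Bases of integer lattices\<close>

definition int_submodule :: "nat \<Rightarrow> int vec set \<Rightarrow> bool" where
  "int_submodule n L \<longleftrightarrow> L \<subseteq> carrier_vec n \<and> 0\<^sub>v n \<in> L \<and>
     (\<forall>x \<in> L. \<forall>y \<in> L. x + y \<in> L) \<and> (\<forall>c. \<forall>x \<in> L. c \<cdot>\<^sub>v x \<in> L)"

definition lattice_basis :: "int vec set \<Rightarrow> int mat \<Rightarrow> bool" where
  "lattice_basis L B \<longleftrightarrow> (\<forall>j < dim_col B. col B j \<in> L) \<and>
     (\<forall>y \<in> carrier_vec (dim_col B). B *\<^sub>v y = 0\<^sub>v (dim_row B) \<longrightarrow> y = 0\<^sub>v (dim_col B)) \<and>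
     (\<forall>x \<in> L. \<exists>y \<in> carrier_vec (dim_col B). x = B *\<^sub>v y)"

lemma int_submoduleD:
  assumes "int_submodule n L"
  shows "L \<subseteq> carrier_vec n" "0\<^sub>v n \<in> L" "x \<in> L \<Longrightarrow> y \<in> L \<Longrightarrow> x + y \<in> L"
    "x \<in> L \<Longrightarrow> c \<cdot>\<^sub>v x \<in> L"
  using assms by (auto simp: int_submodule_def)

lemma vCons_add: "dim_vec v = dim_vec w \<Longrightarrow> vCons a v + vCons b w = vCons (a + b) (v + w)"
  by (intro eq_vecI) (auto simp: vec_index_vCons)

lemma smult_vCons: "c \<cdot>\<^sub>v vCons a v = vCons (c * a) (c \<cdot>\<^sub>v v)"
  by (intro eq_vecI) (auto simp: vec_index_vCons)

lemma int_submodule_tail: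
  assumes L: "int_submodule (Suc n) L"
  shows "int_submodule n {x \<in> carrier_vec n. vCons 0 x \<in> L}"
proof -
  have "vCons 0 (x + y) \<in> L" if "x \<in> carrier_vec n" "y \<in> carrier_vec n" "vCons 0 x \<in> L" "vCons 0 y \<in> L"
    for x y
    using int_submoduleD(3)[OF L that(3,4)] vCons_add[of x y 0 0] that(1,2) by simp
  moreover have "vCons 0 (c \<cdot>\<^sub>v x) \<in> L" if "vCons 0 x \<in> L" for c x
    using int_submoduleD(4)[OF L that, of c] by (simp add: smult_vCons)
  ultimately show ?thesis
    using int_submoduleD(2)[OF L] by (auto simp: int_submodule_def zero_vec_Suc)
qed

definition zero_row_cons :: "'a::zero mat \<Rightarrow> 'a mat" where
  "zero_row_cons B = mat (Suc (dim_row B)) (dim_col B) (\<lambda>(i,j). if i = 0 then 0 else B $$ (i - 1, j))"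

definition col_cons :: "'a vec \<Rightarrow> 'a mat \<Rightarrow> 'a mat" where
  "col_cons w B = mat (dim_vec w) (Suc (dim_col B)) (\<lambda>(i,j). if j = 0 then w $ i else B $$ (i, j - 1))"

lemma zero_row_cons_dims [simp]:
  "dim_row (zero_row_cons B) = Suc (dim_row B)" "dim_col (zero_row_cons B) = dim_col B"
  by (simp_all add: zero_row_cons_def)

lemma col_cons_dims [simp]: "dim_row (col_cons w B) = dim_vec w" "dim_col (col_cons w B) = Suc (dim_col B)"
  by (simp_all add: col_cons_def)

lemma zero_row_cons_carrier [simp]: "B \<in> carrier_mat n d \<Longrightarrow> zero_row_cons B \<in> carrier_mat (Suc n) d"
  by (simp add: zero_row_cons_def)

lemma col_cons_carrier [simp]:
  "w \<in> carrier_vec n \<Longrightarrow> B \<in> carrier_mat n d \<Longrightarrow> col_cons w B \<in> carrier_mat n (Suc d)"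
  by (simp add: col_cons_def)

lemma col_zero_row_cons: "j < dim_col B \<Longrightarrow> col (zero_row_cons B) j = vCons 0 (col B j)"
  by (intro eq_vecI) (auto simp: zero_row_cons_def vec_index_vCons)

lemma zero_row_cons_mult_vec:
  assumes "B \<in> carrier_mat n d" "y \<in> carrier_vec d"
  shows "zero_row_cons B *\<^sub>v y = vCons 0 (B *\<^sub>v y)"
proof (intro eq_vecI)
  fix i assume "i < dim_vec (vCons 0 (B *\<^sub>v y))"
  then show "(zero_row_cons B *\<^sub>v y) $ i = vCons 0 (B *\<^sub>v y) $ i"
    using assms by (cases i) (auto simp: zero_row_cons_def scalar_prod_def)
qed (use assms in \<open>simp add: zero_row_cons_def\<close>)

lemma col_col_cons:
  "dim_vec w = dim_row B \<Longrightarrow> j < Suc (dim_col B) \<Longrightarrow>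
    col (col_cons w B) j = (if j = 0 then w else col B (j - 1))"
  by (intro eq_vecI) (auto simp: col_cons_def)

lemma col_cons_mult_vCons:
  fixes w :: "'a::comm_semiring_0 vec"
  assumes w: "w \<in> carrier_vec n" and B: "B \<in> carrier_mat n d" and y: "y \<in> carrier_vec d"
  shows "col_cons w B *\<^sub>v vCons c y = c \<cdot>\<^sub>v w + B *\<^sub>v y"
proof (intro eq_vecI)
  fix i assume "i < dim_vec (c \<cdot>\<^sub>v w + B *\<^sub>v y)"
  then have i: "i < n" using B by simp
  have "row (col_cons w B) i = vCons (w $ i) (row B i)"
    using w B i by (intro eq_vecI) (auto simp: col_cons_def vec_index_vCons carrier_matD)
  then show "(col_cons w B *\<^sub>v vCons c y) $ i = (c \<cdot>\<^sub>v w + B *\<^sub>v y) $ i"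
    using w B y i by (simp add: ac_simps)
qed (use w B in simp)

lemma col_cons_zero_row_cons_mult_vCons:
  fixes w :: "'a::comm_semiring_0 vec"
  assumes w: "w \<in> carrier_vec (Suc n)" and B: "B \<in> carrier_mat n d" and y: "y \<in> carrier_vec d"
  shows "col_cons w (zero_row_cons B) *\<^sub>v vCons c y =
    vCons (c * w $ 0) (c \<cdot>\<^sub>v vec n (\<lambda>i. w $ Suc i) + B *\<^sub>v y)"
proof -
  have "w = vCons (w $ 0) (vec n (\<lambda>i. w $ Suc i))"
    using w by (intro eq_vecI) (auto simp: vec_index_vCons)
  then have "c \<cdot>\<^sub>v w = vCons (c * w $ 0) (c \<cdot>\<^sub>v vec n (\<lambda>i. w $ Suc i))"
    by (metis smult_vCons)
  then show ?thesis
    using col_cons_mult_vCons[OF w zero_row_cons_carrier[OF B] y] B y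
    by (simp add: zero_row_cons_mult_vec vCons_add)
qed

lemma lattice_basis_zero_row_cons:
  assumes L: "int_submodule (Suc n) L" and first: "\<forall>x \<in> L. x $ 0 = 0"
    and B: "B \<in> carrier_mat n d" and basis: "lattice_basis {x \<in> carrier_vec n. vCons 0 x \<in> L} B"
  shows "lattice_basis L (zero_row_cons B)"
  unfolding lattice_basis_def
proof (intro conjI ballI allI impI)
  fix j assume "j < dim_col (zero_row_cons B)"
  then show "col (zero_row_cons B) j \<in> L"
    using B basis by (auto simp: col_zero_row_cons lattice_basis_def)
next
  fix y assume y: "y \<in> carrier_vec (dim_col (zero_row_cons B))"
    and "zero_row_cons B *\<^sub>v y = 0\<^sub>v (dim_row (zero_row_cons B))"
  then show "y = 0\<^sub>v (dim_col (zero_row_cons B))"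
    using B basis by (auto simp: zero_row_cons_mult_vec zero_vec_Suc lattice_basis_def)
next
  fix x assume x: "x \<in> L"
  then have "x \<in> carrier_vec (Suc n)" using int_submoduleD(1)[OF L] by blast
  then obtain t where t: "x = vCons 0 t" "t \<in> carrier_vec n"
    using first x by (cases x) auto
  then obtain y where "y \<in> carrier_vec d" "t = B *\<^sub>v y"
    using basis B x by (auto simp: lattice_basis_def)
  then show "\<exists>y \<in> carrier_vec (dim_col (zero_row_cons B)). x = zero_row_cons B *\<^sub>v y"
    using B t by (auto simp: zero_row_cons_mult_vec)
qed

lemma int_submodule_first_coordinate_generator:
  assumes L: "int_submodule (Suc n) L" and x1: "x1 \<in> L" "x1 $ 0 \<noteq> 0"
  shows "\<exists>w \<in> L. w $ 0 > 0 \<and> (\<forall>x \<in> L. w $ 0 dvd x $ 0)"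
proof -
  have carrier: "x \<in> carrier_vec (Suc n)" if "x \<in> L" for x
    using int_submoduleD(1)[OF L] that by blast
  define S where "S = {k::nat. k > 0 \<and> (\<exists>x \<in> L. x $ 0 = int k)}"
  have "x1 $ 0 > 0 \<or> ((-1) \<cdot>\<^sub>v x1) $ 0 > 0" using x1 carrier[OF x1(1)] by auto
  then obtain x where "x \<in> L" "x $ 0 > 0" using x1(1) int_submoduleD(4)[OF L] by blast
  then have "nat (x $ 0) \<in> S" unfolding S_def by auto
  then have "(LEAST k. k \<in> S) \<in> S" by (rule LeastI)
  then obtain w where w: "w \<in> L" "w $ 0 > 0" "w $ 0 = int (LEAST k. k \<in> S)" unfolding S_def by auto
  have "w $ 0 dvd x $ 0" if x: "x \<in> L" for x
  proof -
    define x' where "x' = x + (- (x $ 0 div w $ 0)) \<cdot>\<^sub>v w"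
    have "x' \<in> L" using int_submoduleD(3,4)[OF L] x w(1) unfolding x'_def by blast
    have "x' $ 0 = x $ 0 mod w $ 0"
      using carrier[OF x] carrier[OF w(1)] by (simp add: x'_def minus_div_mult_eq_mod[symmetric])
    then have x'0: "0 \<le> x' $ 0" "x' $ 0 < w $ 0" using w(2) by simp_all
    have "x' $ 0 = 0"
    proof (rule ccontr)
      assume "x' $ 0 \<noteq> 0"
      then have "nat (x' $ 0) \<in> S" using x'0 \<open>x' \<in> L\<close> unfolding S_def by auto
      then have "(LEAST k. k \<in> S) \<le> nat (x' $ 0)" by (rule Least_le)
      then show False using w(3) x'0 by linarith
    qed
    then show ?thesis using \<open>x' $ 0 = x $ 0 mod w $ 0\<close> by (simp add: dvd_eq_mod_eq_0)
  qed
  with w show ?thesis by blast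
qed

lemma lattice_basis_col_cons:
  assumes L: "int_submodule (Suc n) L" and w: "w \<in> L" "w $ 0 > 0" "\<forall>x \<in> L. w $ 0 dvd x $ 0"
    and B: "B \<in> carrier_mat n d" and basis: "lattice_basis {x \<in> carrier_vec n. vCons 0 x \<in> L} B"
  shows "lattice_basis L (col_cons w (zero_row_cons B))"
proof -
  have carrier: "x \<in> carrier_vec (Suc n)" if "x \<in> L" for x
    using int_submoduleD(1)[OF L] that by blast
  let ?B = "col_cons w (zero_row_cons B)"
  have B': "zero_row_cons B \<in> carrier_mat (Suc n) d" using B by simp
  have dims: "dim_row ?B = Suc n" "dim_col ?B = Suc d" using carrier[OF w(1)] B by auto
  note mult = col_cons_zero_row_cons_mult_vCons[OF carrier[OF w(1)] B]
  show ?thesis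
    unfolding lattice_basis_def dims
  proof (intro conjI ballI allI impI)
    fix j assume "j < Suc d"
    then show "col ?B j \<in> L"
      using w(1) carrier[OF w(1)] B basis by (auto simp: col_col_cons col_zero_row_cons lattice_basis_def)
  next
    fix y assume y: "y \<in> carrier_vec (Suc d)" and By: "?B *\<^sub>v y = 0\<^sub>v (Suc n)"
    obtain c y' where y': "y = vCons c y'" "y' \<in> carrier_vec d" using y by (cases y) auto
    have "c * w $ 0 = 0" and rest: "c \<cdot>\<^sub>v vec n (\<lambda>i. w $ Suc i) + B *\<^sub>v y' = 0\<^sub>v n"
      using By mult[OF y'(2)] by (auto simp: y'(1) zero_vec_Suc)
    then have "c = 0" using w(2) by simp
    moreover have "0 \<cdot>\<^sub>v vec n (\<lambda>i. w $ Suc i) + B *\<^sub>v y' = B *\<^sub>v y'"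
      using B y'(2) by (intro eq_vecI) auto
    ultimately have "B *\<^sub>v y' = 0\<^sub>v n" using rest by simp
    then show "y = 0\<^sub>v (Suc d)"
      using basis B y' \<open>c = 0\<close> by (auto simp: lattice_basis_def zero_vec_Suc)
  next
    fix x assume x: "x \<in> L"
    obtain q where q: "x $ 0 = w $ 0 * q" using w(3) x by (auto elim: dvdE)
    define x' where "x' = x + (- q) \<cdot>\<^sub>v w"
    have "x' \<in> L" using int_submoduleD(3,4)[OF L] x w(1) unfolding x'_def by blast
    moreover have "x' $ 0 = 0" using carrier[OF x] carrier[OF w(1)] q by (simp add: x'_def)
    moreover have "x' \<in> carrier_vec (Suc n)" using carrier \<open>x' \<in> L\<close> by blast
    ultimately obtain t where t: "x' = vCons 0 t" "t \<in> carrier_vec n"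
      by (cases x') auto
    then obtain y where y: "y \<in> carrier_vec d" "t = B *\<^sub>v y"
      using basis B \<open>x' \<in> L\<close> by (auto simp: lattice_basis_def)
    have "x = q \<cdot>\<^sub>v w + x'"
      using carrier[OF x] carrier[OF w(1)] by (intro eq_vecI) (auto simp: x'_def)
    also have "\<dots> = ?B *\<^sub>v vCons q y"
      using col_cons_mult_vCons[OF carrier[OF w(1)] B' y(1)] t y B
      by (simp add: zero_row_cons_mult_vec)
    finally show "\<exists>y \<in> carrier_vec (Suc d). x = ?B *\<^sub>v y" using y(1) by auto
  qed
qed

lemma int_submodule_lattice_basis:
  assumes "int_submodule n L"
  shows "\<exists>d B. B \<in> carrier_mat n d \<and> lattice_basis L B"
  using assms
proof (induct n arbitrary: L)
  case 0
  have "L \<subseteq> {0\<^sub>v 0}" using int_submoduleD(1)[OF 0] unfolding carrier_vec_def by auto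
  then have "lattice_basis L (0\<^sub>m 0 0)"
    unfolding lattice_basis_def by (auto intro!: bexI[of _ "0\<^sub>v 0"] eq_vecI)
  then show ?case by (intro exI[of _ 0] exI[of _ "0\<^sub>m 0 0"]) auto
next
  case (Suc n)
  obtain d B where B: "B \<in> carrier_mat n d" and basis: "lattice_basis {x \<in> carrier_vec n. vCons 0 x \<in> L} B"
    using Suc.hyps[OF int_submodule_tail[OF Suc.prems]] by blast
  show ?case
  proof (cases "\<forall>x \<in> L. x $ 0 = 0")
    case True
    then show ?thesis
      using lattice_basis_zero_row_cons[OF Suc.prems True B basis] zero_row_cons_carrier[OF B] by blast
  next
    case False
    then obtain w where w: "w \<in> L" "w $ 0 > 0" "\<forall>x \<in> L. w $ 0 dvd x $ 0"
      using int_submodule_first_coordinate_generator[OF Suc.prems] by blast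
    then have "w \<in> carrier_vec (Suc n)" using int_submoduleD(1)[OF Suc.prems] by blast
    then show ?thesis
      using lattice_basis_col_cons[OF Suc.prems w B basis] col_cons_carrier[OF _ zero_row_cons_carrier[OF B]]
      by blast
  qed
qed


section \<open>Integer points of rational kernels\<close>

definition int_kernel :: "rat mat \<Rightarrow> int vec set" where
  "int_kernel M = {x \<in> carrier_vec (dim_col M). M *\<^sub>v map_vec rat_of_int x = 0\<^sub>v (dim_row M)}"

lemma int_submodule_int_kernel:
  assumes M: "M \<in> carrier_mat m n"
  shows "int_submodule n (int_kernel M)"
proof -
  have "M *\<^sub>v map_vec rat_of_int (x + y) = M *\<^sub>v map_vec of_int x + M *\<^sub>v map_vec of_int y"
    if "x \<in> carrier_vec n" "y \<in> carrier_vec n" for x y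
  proof -
    have "map_vec rat_of_int (x + y) = map_vec of_int x + map_vec of_int y"
      using that by (intro eq_vecI) auto
    then show ?thesis using M that by (simp add: mult_add_distrib_mat_vec[of _ m n])
  qed
  moreover have "M *\<^sub>v map_vec rat_of_int (c \<cdot>\<^sub>v x) = of_int c \<cdot>\<^sub>v (M *\<^sub>v map_vec of_int x)"
    if "x \<in> carrier_vec n" for c x
    using M that by (simp add: of_int_hom.vec_hom_smult mult_mat_vec[of _ m n])
  ultimately show ?thesis
    using M by (auto simp: int_submodule_def int_kernel_def of_int_hom.vec_hom_zero)
qed

lemma rat_vec_clear_denominators:
  assumes y: "(y :: rat vec) \<in> carrier_vec n"
  shows "\<exists>c::int. c > 0 \<and> (\<exists>z \<in> carrier_vec n. map_vec of_int z = of_int c \<cdot>\<^sub>v y)"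
proof -
  define b where "b i = snd (quotient_of (y $ i))" for i
  have bpos: "b i > 0" for i unfolding b_def using quotient_of_denom_pos by (metis prod.collapse)
  have bint: "of_int (b i) * y $ i \<in> \<int>" for i
  proof -
    obtain a b' where q: "quotient_of (y $ i) = (a, b')" by (cases "quotient_of (y $ i)")
    then have "y $ i = of_int a / of_int b'" by (simp add: quotient_of_div)
    moreover have "b' > 0" using q quotient_of_denom_pos by blast
    ultimately show ?thesis unfolding b_def q by simp
  qed
  define c where "c = (\<Prod>i<n. b i)"
  have cint: "of_int c * y $ i \<in> \<int>" if i: "i < n" for i
  proof -
    have "c = b i * (\<Prod>j \<in> {..<n} - {i}. b j)" unfolding c_def using i by (simp add: prod.remove)
    then have "of_int c * y $ i = (of_int (b i) * y $ i) * of_int (\<Prod>j \<in> {..<n} - {i}. b j)" by simp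
    also have "\<dots> \<in> \<int>" by (rule Ints_mult[OF bint Ints_of_int])
    finally show ?thesis .
  qed
  define z where "z = vec n (\<lambda>i. \<lfloor>of_int c * y $ i\<rfloor>)"
  have "map_vec of_int z = of_int c \<cdot>\<^sub>v y"
    using y cint unfolding z_def by (intro eq_vecI) auto
  moreover have "c > 0" unfolding c_def using bpos by (simp add: prod_pos)
  ultimately show ?thesis unfolding z_def by (intro exI[of _ c]) auto
qed

lemma int_injective_imp_rat_injective:
  assumes B: "(B :: int mat) \<in> carrier_mat n d"
    and inj: "\<forall>y \<in> carrier_vec d. B *\<^sub>v y = 0\<^sub>v n \<longrightarrow> y = 0\<^sub>v d"
    and y: "(y :: rat vec) \<in> carrier_vec d" and By: "map_mat of_int B *\<^sub>v y = 0\<^sub>v n"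
  shows "y = 0\<^sub>v d"
proof -
  obtain c z where c: "c > 0" and z: "z \<in> carrier_vec d" and cz: "map_vec of_int z = of_int c \<cdot>\<^sub>v y"
    using rat_vec_clear_denominators[OF y] by auto
  have "map_vec rat_of_int (B *\<^sub>v z) = of_int c \<cdot>\<^sub>v (map_mat of_int B *\<^sub>v y)"
    using B y z by (simp add: of_int_hom.mult_mat_vec_hom[OF B z] cz mult_mat_vec[of _ n d])
  also have "\<dots> = map_vec of_int (0\<^sub>v n)" using By by (intro eq_vecI) auto
  finally have "B *\<^sub>v z = 0\<^sub>v n" by (rule of_int_hom.vec_hom_inj)
  then have "z = 0\<^sub>v d" using inj z by blast
  then have "of_int c \<cdot>\<^sub>v y = 0\<^sub>v d" using cz by (simp add: of_int_hom.vec_hom_zero)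
  show ?thesis
  proof (intro eq_vecI)
    fix i assume "i < dim_vec (0\<^sub>v d :: rat vec)"
    then have "i < d" by simp
    then have "of_int c * y $ i = 0"
      using arg_cong[OF \<open>of_int c \<cdot>\<^sub>v y = 0\<^sub>v d\<close>, of "\<lambda>v. v $ i"] y by simp
    then show "y $ i = 0\<^sub>v d $ i" using c \<open>i < d\<close> by simp
  qed (use y in simp)
qed

lemma lattice_basis_rat_cancel_left:
  assumes B: "(B :: int mat) \<in> carrier_mat n d" and basis: "lattice_basis L B"
    and N: "(N :: rat mat) \<in> carrier_mat d k" and BN: "map_mat of_int B * N = 0\<^sub>m n k"
  shows "N = 0\<^sub>m d k"
proof (intro eq_matI)
  fix i j assume "i < dim_row (0\<^sub>m d k :: rat mat)" "j < dim_col (0\<^sub>m d k :: rat mat)"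
  then have i: "i < d" and j: "j < k" by auto
  have "map_mat of_int B *\<^sub>v col N j = col (map_mat of_int B * N) j"
    using col_mult2[of "map_mat of_int B" n d N k j] B N j by simp
  also have "\<dots> = 0\<^sub>v n" unfolding BN using j by (intro eq_vecI) auto
  finally have "col N j = 0\<^sub>v d"
    using basis B N by (intro int_injective_imp_rat_injective[OF B]) (auto simp: lattice_basis_def)
  moreover have "col N j $ i = N $$ (i, j)" using N i j by simp
  ultimately show "N $$ (i, j) = 0\<^sub>m d k $$ (i, j)" using i j by simp
qed (use N in auto)

lemma lattice_basis_int_kernel_mult:
  assumes M: "M \<in> carrier_mat m n" and B: "B \<in> carrier_mat n d" and basis: "lattice_basis (int_kernel M) B"
  shows "M * map_mat of_int B = 0\<^sub>m m d"
proof (intro eq_matI)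
  fix i j assume "i < dim_row (0\<^sub>m m d :: rat mat)" "j < dim_col (0\<^sub>m m d :: rat mat)"
  then have i: "i < m" and j: "j < d" by auto
  have "col (map_mat rat_of_int B) j = map_vec of_int (col B j)" using B j by (intro eq_vecI) auto
  then have "(M * map_mat of_int B) $$ (i, j) = (M *\<^sub>v map_vec of_int (col B j)) $ i"
    using M B i j by simp
  also have "\<dots> = 0"
    using basis B M i j by (auto simp: lattice_basis_def int_kernel_def)
  finally show "(M * map_mat of_int B) $$ (i, j) = 0\<^sub>m m d $$ (i, j)" using i j by simp
qed (use M B in auto)

lemma lattice_basis_int_kernel_mult_vec:
  assumes M: "M \<in> carrier_mat m n" and B: "B \<in> carrier_mat n d" and basis: "lattice_basis (int_kernel M) B"
    and y: "y \<in> carrier_vec d"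
  shows "M *\<^sub>v (map_mat of_int B *\<^sub>v y) = 0\<^sub>v m"
proof -
  have "M *\<^sub>v (map_mat of_int B *\<^sub>v y) = (M * map_mat of_int B) *\<^sub>v y" using M B y by simp
  also have "\<dots> = 0\<^sub>v m"
    unfolding lattice_basis_int_kernel_mult[OF M B basis] using y by (intro eq_vecI) auto
  finally show ?thesis .
qed

lemma lattice_basis_intertwining:
  assumes A: "A \<in> carrier_mat n n" and B: "B \<in> carrier_mat n d" and basis: "lattice_basis L B"
    and invariant: "\<And>x. x \<in> L \<Longrightarrow> A *\<^sub>v x \<in> L"
  shows "\<exists>A1 \<in> carrier_mat d d. A * B = B * A1"
proof -
  have "\<forall>j. \<exists>y. j < d \<longrightarrow> y \<in> carrier_vec d \<and> A *\<^sub>v col B j = B *\<^sub>v y"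
    using basis B invariant by (auto simp: lattice_basis_def)
  then obtain Y where Y: "\<And>j. j < d \<Longrightarrow> Y j \<in> carrier_vec d \<and> A *\<^sub>v col B j = B *\<^sub>v Y j"
    by metis
  define A1 where "A1 = mat d d (\<lambda>(i,j). Y j $ i)"
  have colA1: "col A1 j = Y j" if "j < d" for j
    using Y[OF that] that unfolding A1_def by (intro eq_vecI) auto
  have "A * B = B * A1"
  proof (intro eq_matI)
    fix i j assume "i < dim_row (B * A1)" "j < dim_col (B * A1)"
    then have i: "i < n" and j: "j < d" using B by (auto simp: A1_def)
    have "(A * B) $$ (i, j) = (A *\<^sub>v col B j) $ i" using A B i j by simp
    also have "\<dots> = (B *\<^sub>v col A1 j) $ i" using Y[OF j] colA1[OF j] by simp
    also have "\<dots> = (B * A1) $$ (i, j)" using B i j by (simp add: A1_def)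
    finally show "(A * B) $$ (i, j) = (B * A1) $$ (i, j)" .
  qed (use A B in \<open>auto simp: A1_def\<close>)
  then show ?thesis by (auto simp: A1_def)
qed

lemma int_kernel_lattice_basis_intertwining:
  assumes A: "(A :: int mat) \<in> carrier_mat n n" and M: "M \<in> carrier_mat n n"
    and commute: "M * map_mat of_int A = map_mat of_int A * M"
  shows "\<exists>d B A1. B \<in> carrier_mat n d \<and> lattice_basis (int_kernel M) B \<and>
    A1 \<in> carrier_mat d d \<and> A * B = B * A1"
proof -
  obtain d B where B: "B \<in> carrier_mat n d" and basis: "lattice_basis (int_kernel M) B"
    using int_submodule_lattice_basis[OF int_submodule_int_kernel[OF M]] by blast
  have "A *\<^sub>v x \<in> int_kernel M" if x: "x \<in> int_kernel M" for x
  proof -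
    have xc: "x \<in> carrier_vec n" and Mx: "M *\<^sub>v map_vec of_int x = 0\<^sub>v n"
      using x M by (auto simp: int_kernel_def)
    have AQ: "map_mat rat_of_int A \<in> carrier_mat n n" using A by simp
    have "M *\<^sub>v map_vec of_int (A *\<^sub>v x) = (M * map_mat of_int A) *\<^sub>v map_vec of_int x"
      using A M xc by (simp add: of_int_hom.mult_mat_vec_hom[OF A xc])
    also have "\<dots> = map_mat of_int A *\<^sub>v (M *\<^sub>v map_vec of_int x)"
      unfolding commute using M AQ xc by simp
    also have "\<dots> = 0\<^sub>v n" unfolding Mx using AQ by (intro eq_vecI) auto
    finally show ?thesis using A M xc by (simp add: int_kernel_def)
  qed
  then obtain A1 where "A1 \<in> carrier_mat d d" "A * B = B * A1"
    using lattice_basis_intertwining[OF A B basis] by blast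
  with B basis show ?thesis by blast
qed


definition append_cols :: "'a::zero mat \<Rightarrow> 'a mat \<Rightarrow> 'a mat" where
  "append_cols B1 B2 = four_block_mat B1 B2 (0\<^sub>m 0 (dim_col B1)) (0\<^sub>m 0 (dim_col B2))"

definition block_diag_mat :: "'a::zero mat \<Rightarrow> 'a mat \<Rightarrow> 'a mat" where
  "block_diag_mat A1 A2 =
     four_block_mat A1 (0\<^sub>m (dim_row A1) (dim_col A2)) (0\<^sub>m (dim_row A2) (dim_col A1)) A2"

lemma block_diag_mat_dims [simp]:
  "dim_row (block_diag_mat A1 A2) = dim_row A1 + dim_row A2"
  "dim_col (block_diag_mat A1 A2) = dim_col A1 + dim_col A2"
  by (simp_all add: block_diag_mat_def)

lemma append_cols_carrier [simp]:
  "B1 \<in> carrier_mat n d1 \<Longrightarrow> B2 \<in> carrier_mat n d2 \<Longrightarrow> append_cols B1 B2 \<in> carrier_mat n (d1 + d2)"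
  using four_block_carrier_mat[of B1 n d1 "0\<^sub>m 0 d2" 0 d2] by (simp add: append_cols_def)

lemma block_diag_mat_carrier [simp]:
  "A1 \<in> carrier_mat d1 d1 \<Longrightarrow> A2 \<in> carrier_mat d2 d2 \<Longrightarrow>
    block_diag_mat A1 A2 \<in> carrier_mat (d1 + d2) (d1 + d2)"
  by (simp add: block_diag_mat_def)

lemma append_cols_mult_vec:
  assumes "B1 \<in> carrier_mat n d1" "B2 \<in> carrier_mat n d2" "y1 \<in> carrier_vec d1" "y2 \<in> carrier_vec d2"
  shows "append_cols B1 B2 *\<^sub>v (y1 @\<^sub>v y2) = B1 *\<^sub>v y1 + B2 *\<^sub>v y2"
proof -
  have "append_cols B1 B2 *\<^sub>v (y1 @\<^sub>v y2) =
      (B1 *\<^sub>v y1 + B2 *\<^sub>v y2) @\<^sub>v (0\<^sub>m 0 d1 *\<^sub>v y1 + 0\<^sub>m 0 d2 *\<^sub>v y2)"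
    using assms by (simp add: append_cols_def four_block_mat_mult_vec[of _ n d1 _ d2 _ 0])
  also have "\<dots> = B1 *\<^sub>v y1 + B2 *\<^sub>v y2" using assms by (intro eq_vecI) auto
  finally show ?thesis .
qed

lemma mult_append_cols:
  assumes A: "A \<in> carrier_mat m n" and B1: "B1 \<in> carrier_mat n d1" and B2: "B2 \<in> carrier_mat n d2"
  shows "A * append_cols B1 B2 = append_cols (A * B1) (A * B2)"
proof (intro eq_matI)
  fix i j assume "i < dim_row (append_cols (A * B1) (A * B2))" "j < dim_col (append_cols (A * B1) (A * B2))"
  then have i: "i < m" and j: "j < d1 + d2" using A B1 B2 by (auto simp: append_cols_def)
  have "col (append_cols B1 B2) j = (if j < d1 then col B1 j else col B2 (j - d1))"
    using B1 B2 j by (intro eq_vecI) (auto simp: append_cols_def)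
  then show "(A * append_cols B1 B2) $$ (i, j) = append_cols (A * B1) (A * B2) $$ (i, j)"
    using A B1 B2 i j by (simp add: append_cols_def)
qed (use A B1 B2 in \<open>auto simp: append_cols_def\<close>)

lemma append_cols_mult_block_diag_mat:
  assumes "B1 \<in> carrier_mat n d1" "B2 \<in> carrier_mat n d2" "A1 \<in> carrier_mat d1 d1" "A2 \<in> carrier_mat d2 d2"
  shows "append_cols B1 B2 * block_diag_mat A1 A2 = append_cols (B1 * A1) (B2 * A2)"
  using assms
  by (simp add: append_cols_def block_diag_mat_def
      mult_four_block_mat[of B1 n d1 B2 d2 "0\<^sub>m 0 d1" 0 "0\<^sub>m 0 d2" A1 d1 "0\<^sub>m d1 d2" d2 "0\<^sub>m d2 d1" A2])

lemma det_block_diag_mat: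
  fixes A1 :: "'a::idom mat"
  assumes "A1 \<in> carrier_mat d1 d1" "A2 \<in> carrier_mat d2 d2"
  shows "det (block_diag_mat A1 A2) = det A1 * det A2"
  using assms by (simp add: block_diag_mat_def det_four_block_mat_upper_right_zero)


lemma prod_power_int_distrib: "(\<Prod>j \<in> S. f j) powi m = (\<Prod>j \<in> S. (f j :: 'a::field) powi m)"
  by (induct S rule: infinite_finite_induct) (auto simp: power_int_mult_distrib)

lemma power_int_sum:
  assumes "(x :: 'a::field) \<noteq> 0"
  shows "x powi (\<Sum>j \<in> S. a j) = (\<Prod>j \<in> S. x powi a j)"
  using assms by (induct S rule: infinite_finite_induct) (auto simp: power_int_add)

lemma phi_index: "i < dim_row M \<Longrightarrow> phi M u $ i = (\<Prod>j < dim_col M. (u $ j) powi (M $$ (i, j)))"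
  by (simp add: phi_def)

lemma phi_dim [simp]: "dim_vec (phi M u) = dim_row M"
  by (simp add: phi_def)

lemma phi_mult:
  assumes M: "M \<in> carrier_mat k m" and N: "N \<in> carrier_mat m n"
    and u: "u \<in> carrier_vec n" and u0: "\<forall>i < n. (u $ i :: 'a::field) \<noteq> 0"
  shows "phi M (phi N u) = phi (M * N) u"
proof (intro eq_vecI)
  fix i assume "i < dim_vec (phi (M * N) u)"
  then have i: "i < k" using M by simp
  have "phi M (phi N u) $ i = (\<Prod>j<m. (\<Prod>l<n. (u $ l) powi (N $$ (j, l))) powi (M $$ (i, j)))"
    using M N i by (simp add: phi_index)
  also have "\<dots> = (\<Prod>j<m. \<Prod>l<n. (u $ l) powi (N $$ (j, l) * M $$ (i, j)))"
    by (simp add: prod_power_int_distrib power_int_mult)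
  also have "\<dots> = (\<Prod>l<n. \<Prod>j<m. (u $ l) powi (M $$ (i, j) * N $$ (j, l)))"
    by (subst prod.swap) (simp add: mult.commute)
  also have "\<dots> = (\<Prod>l<n. (u $ l) powi (\<Sum>j<m. M $$ (i, j) * N $$ (j, l)))"
    using u0 by (intro prod.cong refl, subst power_int_sum) auto
  also have "\<dots> = phi (M * N) u $ i"
    using M N i by (simp add: phi_index scalar_prod_def lessThan_atLeast0)
  finally show "phi M (phi N u) $ i = phi (M * N) u $ i" .
qed (use M in simp)


lemma index_block_diag_mat:
  assumes "A1 \<in> carrier_mat d1 d1" "A2 \<in> carrier_mat d2 d2" "i < d1 + d2" "j < d1 + d2"
  shows "block_diag_mat A1 A2 $$ (i, j) =
    (if i < d1 then if j < d1 then A1 $$ (i, j) else 0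
     else if j < d1 then 0 else A2 $$ (i - d1, j - d1))"
  using assms by (simp add: block_diag_mat_def)

lemma phi_block_diag_mat:
  assumes A1: "A1 \<in> carrier_mat d1 d1" and A2: "A2 \<in> carrier_mat d2 d2"
    and u: "u \<in> carrier_vec (d1 + d2)"
  shows "phi (block_diag_mat A1 A2) u = phi A1 (vec_first u d1) @\<^sub>v phi A2 (vec_last u d2)"
proof (intro eq_vecI)
  fix i assume "i < dim_vec (phi A1 (vec_first u d1) @\<^sub>v phi A2 (vec_last u d2))"
  then have i: "i < d1 + d2" using A1 A2 by simp
  note entry = index_block_diag_mat[OF A1 A2 i]
  have phi: "phi (block_diag_mat A1 A2) u $ i =
      (\<Prod>j < d1 + d2. (u $ j) powi (block_diag_mat A1 A2 $$ (i, j)))"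
    using A1 A2 i by (simp add: phi_index)
  show "phi (block_diag_mat A1 A2) u $ i = (phi A1 (vec_first u d1) @\<^sub>v phi A2 (vec_last u d2)) $ i"
  proof (cases "i < d1")
    case True
    have "phi (block_diag_mat A1 A2) u $ i = (\<Prod>j < d1. (u $ j) powi (block_diag_mat A1 A2 $$ (i, j)))"
      unfolding phi using True by (intro prod.mono_neutral_right) (auto simp: entry)
    also have "\<dots> = (\<Prod>j < d1. (vec_first u d1 $ j) powi (A1 $$ (i, j)))"
      using True by (intro prod.cong) (auto simp: entry vec_first_def)
    also have "\<dots> = phi A1 (vec_first u d1) $ i" using A1 True by (simp add: phi_index)
    finally show ?thesis using A1 True by simp
  next
    case False
    have "phi (block_diag_mat A1 A2) u $ i =
        (\<Prod>j \<in> {d1..<d1 + d2}. (u $ j) powi (block_diag_mat A1 A2 $$ (i, j)))"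
      unfolding phi using False by (intro prod.mono_neutral_right) (auto simp: entry)
    also have "\<dots> = (\<Prod>j < d2. (u $ (d1 + j)) powi (block_diag_mat A1 A2 $$ (i, d1 + j)))"
      by (simp add: prod.atLeastLessThan_shift_0[of _ d1 "d1 + d2"] lessThan_atLeast0 comp_def)
    also have "\<dots> = (\<Prod>j < d2. (vec_last u d2 $ j) powi (A2 $$ (i - d1, j)))"
      using False i u by (intro prod.cong) (auto simp: index_block_diag_mat[OF A1 A2] vec_last_def)
    also have "\<dots> = phi A2 (vec_last u d2) $ (i - d1)" using A2 False i by (simp add: phi_index)
    finally show ?thesis using A1 A2 False i by simp
  qed
qed (use A1 A2 in simp)


section \<open>Primary decomposition over the integers\<close>

lemma coprime_imp_bezout:
  fixes a b :: "'a::euclidean_ring_gcd"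
  assumes "coprime a b"
  obtains u v where "u * a + v * b = 1"
  using bezout_coefficients_fst_snd[of a b] assms by simp

lemma poly_mat_mult_vec:
  assumes A: "A \<in> carrier_mat n n" and x: "x \<in> carrier_vec n"
  shows "poly_mat p A *\<^sub>v (poly_mat q A *\<^sub>v x) = poly_mat (p * q) A *\<^sub>v x"
  using A x by (simp add: poly_mat_mult[OF A] assoc_mult_mat_vec[of _ n n _ n])

lemma poly_mat_coprime_kernels_disjoint:
  fixes A :: "'a::field_gcd mat"
  assumes A: "A \<in> carrier_mat n n" and "coprime f g" and x: "x \<in> carrier_vec n"
    and fx: "poly_mat f A *\<^sub>v x = 0\<^sub>v n" and gx: "poly_mat g A *\<^sub>v x = 0\<^sub>v n"
  shows "x = 0\<^sub>v n"
proof -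
  obtain u v where uv: "u * f + v * g = 1" using coprime_imp_bezout[OF \<open>coprime f g\<close>] by blast
  have "x = poly_mat (u * f + v * g) A *\<^sub>v x" using A x by (simp add: uv poly_mat_1)
  also have "\<dots> = poly_mat u A *\<^sub>v (poly_mat f A *\<^sub>v x) + poly_mat v A *\<^sub>v (poly_mat g A *\<^sub>v x)"
    using A x by (simp add: poly_mat_add[OF A] poly_mat_mult_vec add_mult_distrib_mat_vec[of _ n n])
  also have "\<dots> = 0\<^sub>v n" unfolding fx gx using A by (intro eq_vecI) auto
  finally show ?thesis .
qed

lemma poly_mat_coprime_kernels_span:
  fixes A :: "'a::field_gcd mat"
  assumes A: "A \<in> carrier_mat n n" and "coprime f g" and fg: "poly_mat (f * g) A = 0\<^sub>m n n"
    and x: "x \<in> carrier_vec n"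
  shows "\<exists>a b. a \<in> carrier_vec n \<and> b \<in> carrier_vec n \<and> x = a + b \<and>
    poly_mat f A *\<^sub>v a = 0\<^sub>v n \<and> poly_mat g A *\<^sub>v b = 0\<^sub>v n"
proof -
  obtain u v where uv: "v * g + u * f = 1"
    using coprime_imp_bezout[OF \<open>coprime f g\<close>] by (metis add.commute)
  define a where "a = poly_mat (v * g) A *\<^sub>v x"
  define b where "b = poly_mat (u * f) A *\<^sub>v x"
  have vanish: "poly_mat q A *\<^sub>v x = 0\<^sub>v n" if "f * g dvd q" for q
    using poly_mat_eq_0_dvd[OF A fg that] x by (intro eq_vecI) auto
  have "x = poly_mat (v * g + u * f) A *\<^sub>v x" using A x by (simp add: uv poly_mat_1)
  also have "\<dots> = a + b"
    using A x by (simp add: a_def b_def poly_mat_add[OF A] add_mult_distrib_mat_vec[of _ n n])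
  finally have "x = a + b" .
  moreover have "a \<in> carrier_vec n" unfolding a_def using poly_mat_carrier[OF A] x by (rule mult_mat_vec_carrier)
  moreover have "b \<in> carrier_vec n" unfolding b_def using poly_mat_carrier[OF A] x by (rule mult_mat_vec_carrier)
  moreover have "poly_mat f A *\<^sub>v a = 0\<^sub>v n"
    unfolding a_def poly_mat_mult_vec[OF A x] by (rule vanish) (simp add: mult.left_commute)
  moreover have "poly_mat g A *\<^sub>v b = 0\<^sub>v n"
    unfolding b_def poly_mat_mult_vec[OF A x] by (rule vanish) (simp add: mult.commute mult.left_commute)
  ultimately show ?thesis by blast
qed

context
  fixes F G :: "rat mat" and B1 B2 :: "int mat" and n d1 d2 :: nat
  assumes F: "F \<in> carrier_mat n n" and G: "G \<in> carrier_mat n n"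
    and disjoint: "\<And>x. x \<in> carrier_vec n \<Longrightarrow> F *\<^sub>v x = 0\<^sub>v n \<Longrightarrow> G *\<^sub>v x = 0\<^sub>v n \<Longrightarrow> x = 0\<^sub>v n"
    and span: "\<And>x. x \<in> carrier_vec n \<Longrightarrow> \<exists>a b. a \<in> carrier_vec n \<and> b \<in> carrier_vec n \<and> x = a + b \<and>
      F *\<^sub>v a = 0\<^sub>v n \<and> G *\<^sub>v b = 0\<^sub>v n"
    and B1: "B1 \<in> carrier_mat n d1" and basis1: "lattice_basis (int_kernel F) B1"
    and B2: "B2 \<in> carrier_mat n d2" and basis2: "lattice_basis (int_kernel G) B2"
begin

lemma append_cols_kernel_bases_injective:
  assumes y: "y \<in> carrier_vec (d1 + d2)" and Py: "append_cols B1 B2 *\<^sub>v y = 0\<^sub>v n"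
  shows "y = 0\<^sub>v (d1 + d2)"
proof -
  define y1 where "y1 = vec_first y d1"
  define y2 where "y2 = vec_last y d2"
  have y1: "y1 \<in> carrier_vec d1" and y2: "y2 \<in> carrier_vec d2" by (auto simp: y1_def y2_def)
  have y12: "y = y1 @\<^sub>v y2" using y by (simp add: y1_def y2_def)
  have sum: "B1 *\<^sub>v y1 + B2 *\<^sub>v y2 = 0\<^sub>v n" using Py by (simp add: y12 append_cols_mult_vec[OF B1 B2 y1 y2])
  define z where "z = map_vec rat_of_int (B1 *\<^sub>v y1)"
  define w where "w = map_vec rat_of_int (B2 *\<^sub>v y2)"
  have z: "z \<in> carrier_vec n" and w: "w \<in> carrier_vec n" using B1 B2 y1 y2 by (auto simp: z_def w_def)
  have Fz: "F *\<^sub>v z = 0\<^sub>v n"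
    using lattice_basis_int_kernel_mult_vec[OF F B1 basis1, of "map_vec of_int y1"] B1 y1
    by (simp add: z_def of_int_hom.mult_mat_vec_hom)
  have Gw: "G *\<^sub>v w = 0\<^sub>v n"
    using lattice_basis_int_kernel_mult_vec[OF G B2 basis2, of "map_vec of_int y2"] B2 y2
    by (simp add: w_def of_int_hom.mult_mat_vec_hom)
  have "z = (-1) \<cdot>\<^sub>v w"
  proof (intro eq_vecI)
    fix i assume "i < dim_vec ((-1) \<cdot>\<^sub>v w)"
    then have i: "i < n" using w by simp
    have "(B1 *\<^sub>v y1) $ i + (B2 *\<^sub>v y2) $ i = 0" using arg_cong[OF sum, of "\<lambda>v. v $ i"] B1 B2 i by simp
    then show "z $ i = ((-1) \<cdot>\<^sub>v w) $ i" using B1 B2 i by (simp add: z_def w_def eq_neg_iff_add_eq_0)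
  qed (use z w in simp)
  then have "G *\<^sub>v z = 0\<^sub>v n" using G w Gw by (simp add: mult_mat_vec[of _ n n]) (intro eq_vecI, auto)
  then have "z = 0\<^sub>v n" using disjoint[OF z Fz] by blast
  then have B1y1: "B1 *\<^sub>v y1 = 0\<^sub>v n" by (simp add: z_def)
  then have "y1 = 0\<^sub>v d1" using basis1 B1 y1 by (auto simp: lattice_basis_def)
  moreover have "B2 *\<^sub>v y2 = 0\<^sub>v n" using sum B1y1 B2 y2 by simp
  then have "y2 = 0\<^sub>v d2" using basis2 B2 y2 by (auto simp: lattice_basis_def)
  ultimately show ?thesis by (auto simp: y12)
qed

lemma append_cols_kernel_bases_scaled_surjective:
  assumes x: "x \<in> carrier_vec n"
  shows "\<exists>c y. c \<noteq> 0 \<and> y \<in> carrier_vec (d1 + d2) \<and> append_cols B1 B2 *\<^sub>v y = c \<cdot>\<^sub>v x"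
proof -
  obtain a b where a: "a \<in> carrier_vec n" and b: "b \<in> carrier_vec n"
    and xab: "map_vec rat_of_int x = a + b" and Fa: "F *\<^sub>v a = 0\<^sub>v n" and Gb: "G *\<^sub>v b = 0\<^sub>v n"
    using span[of "map_vec rat_of_int x"] x by auto
  obtain c1 a' where c1: "c1 > 0" and a': "a' \<in> carrier_vec n" and ca: "map_vec of_int a' = of_int c1 \<cdot>\<^sub>v a"
    using rat_vec_clear_denominators[OF a] by auto
  obtain c2 b' where c2: "c2 > 0" and b': "b' \<in> carrier_vec n" and cb: "map_vec of_int b' = of_int c2 \<cdot>\<^sub>v b"
    using rat_vec_clear_denominators[OF b] by auto
  have "a' \<in> int_kernel F"
    using F a a' Fa by (simp add: int_kernel_def ca mult_mat_vec[of _ n n]) (intro eq_vecI, auto)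
  then obtain w1 where w1: "w1 \<in> carrier_vec d1" "a' = B1 *\<^sub>v w1"
    using basis1 B1 by (auto simp: lattice_basis_def)
  have "b' \<in> int_kernel G"
    using G b b' Gb by (simp add: int_kernel_def cb mult_mat_vec[of _ n n]) (intro eq_vecI, auto)
  then obtain w2 where w2: "w2 \<in> carrier_vec d2" "b' = B2 *\<^sub>v w2"
    using basis2 B2 by (auto simp: lattice_basis_def)
  define y where "y = (c2 \<cdot>\<^sub>v w1) @\<^sub>v (c1 \<cdot>\<^sub>v w2)"
  have "append_cols B1 B2 *\<^sub>v y = c2 \<cdot>\<^sub>v a' + c1 \<cdot>\<^sub>v b'"
    using B1 B2 w1 w2
    by (simp add: y_def append_cols_mult_vec mult_mat_vec_smult[OF B1 w1(1)] mult_mat_vec_smult[OF B2 w2(1)])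
  also have "\<dots> = (c1 * c2) \<cdot>\<^sub>v x"
  proof (intro eq_vecI)
    fix i assume "i < dim_vec ((c1 * c2) \<cdot>\<^sub>v x)"
    then have i: "i < n" using x by simp
    have "rat_of_int (a' $ i) = of_int c1 * a $ i" using arg_cong[OF ca, of "\<lambda>v. v $ i"] i a a' by simp
    moreover have "rat_of_int (b' $ i) = of_int c2 * b $ i" using arg_cong[OF cb, of "\<lambda>v. v $ i"] i b b' by simp
    moreover have "rat_of_int (x $ i) = a $ i + b $ i" using arg_cong[OF xab, of "\<lambda>v. v $ i"] i a b x by simp
    ultimately have "rat_of_int (c2 * a' $ i + c1 * b' $ i) = rat_of_int (c1 * c2 * x $ i)"
      by (simp add: algebra_simps)
    then show "(c2 \<cdot>\<^sub>v a' + c1 \<cdot>\<^sub>v b') $ i = ((c1 * c2) \<cdot>\<^sub>v x) $ i"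
      using i a' b' x by (simp only: of_int_eq_iff) simp
  qed (use a' b' x in simp)
  finally show ?thesis using c1 c2 w1 w2 by (intro exI[of _ "c1 * c2"] exI[of _ y]) (auto simp: y_def)
qed

lemma append_cols_kernel_bases_nonsingular: "d1 + d2 = n \<and> det (append_cols B1 B2) \<noteq> 0"
proof -
  have P: "append_cols B1 B2 \<in> carrier_mat n (d1 + d2)" using B1 B2 by simp
  have "d1 + d2 \<le> n"
    using injective_mat_dim_le[OF P] append_cols_kernel_bases_injective by blast
  moreover have "n \<le> d1 + d2"
    by (rule scaled_surjective_mat_dim_le[OF P], rule append_cols_kernel_bases_scaled_surjective) simp
  ultimately have n: "d1 + d2 = n" by simp
  moreover have "det (append_cols B1 B2) \<noteq> 0"
  proof
    assume "det (append_cols B1 B2) = 0"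
    then obtain y where "y \<in> carrier_vec n" "y \<noteq> 0\<^sub>v n" "append_cols B1 B2 *\<^sub>v y = 0\<^sub>v n"
      using det_0_iff_vec_prod_zero[of _ n] P n by auto
    then show False using append_cols_kernel_bases_injective n by auto
  qed
  ultimately show ?thesis by blast
qed

end

lemma intertwined_poly_mat_eq_0:
  assumes A: "(A :: int mat) \<in> carrier_mat n n" and B: "B \<in> carrier_mat n d" and A1: "A1 \<in> carrier_mat d d"
    and basis: "lattice_basis (int_kernel (poly_mat f (map_mat of_int A))) B" and AB: "A * B = B * A1"
  shows "poly_mat f (map_mat rat_of_int A1) = 0\<^sub>m d d"
proof (rule lattice_basis_rat_cancel_left[OF B basis])
  have AQ: "map_mat rat_of_int A \<in> carrier_mat n n" using A by simp
  have ABQ: "map_mat rat_of_int A * map_mat of_int B = map_mat of_int B * map_mat of_int A1"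
    using arg_cong[OF AB, of "map_mat rat_of_int"]
    by (simp add: of_int_hom.mat_hom_mult[OF A B] of_int_hom.mat_hom_mult[OF B A1])
  have "map_mat of_int B * poly_mat f (map_mat of_int A1) = poly_mat f (map_mat of_int A) * map_mat of_int B"
    using poly_mat_intertwine[OF AQ _ _ ABQ] B A1 by simp
  also have "\<dots> = 0\<^sub>m n d" using lattice_basis_int_kernel_mult[OF poly_mat_carrier[OF AQ] B basis] .
  finally show "map_mat of_int B * poly_mat f (map_mat of_int A1) = 0\<^sub>m n d" .
qed (use A1 in simp)

theorem int_mat_coprime_decomposition:
  fixes A :: "int mat" and f g :: "rat poly"
  assumes A: "A \<in> carrier_mat n n" and "coprime f g"
    and fg: "poly_mat (f * g) (map_mat of_int A) = 0\<^sub>m n n"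
  shows "\<exists>d1 d2 A1 A2 P. d1 + d2 = n \<and> A1 \<in> carrier_mat d1 d1 \<and> A2 \<in> carrier_mat d2 d2 \<and>
    P \<in> carrier_mat n n \<and> det P \<noteq> 0 \<and> A * P = P * block_diag_mat A1 A2 \<and>
    poly_mat f (map_mat of_int A1) = 0\<^sub>m d1 d1 \<and> poly_mat g (map_mat of_int A2) = 0\<^sub>m d2 d2"
proof -
  have AQ: "map_mat rat_of_int A \<in> carrier_mat n n" using A by simp
  note commute = poly_mat_commute[OF AQ]
  obtain d1 B1 A1 where B1: "B1 \<in> carrier_mat n d1"
    and basis1: "lattice_basis (int_kernel (poly_mat f (map_mat rat_of_int A))) B1"
    and A1: "A1 \<in> carrier_mat d1 d1" and AB1: "A * B1 = B1 * A1"
    using int_kernel_lattice_basis_intertwining[OF A poly_mat_carrier[OF AQ] commute] by blast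
  obtain d2 B2 A2 where B2: "B2 \<in> carrier_mat n d2"
    and basis2: "lattice_basis (int_kernel (poly_mat g (map_mat rat_of_int A))) B2"
    and A2: "A2 \<in> carrier_mat d2 d2" and AB2: "A * B2 = B2 * A2"
    using int_kernel_lattice_basis_intertwining[OF A poly_mat_carrier[OF AQ] commute] by blast
  define P where "P = append_cols B1 B2"
  have "d1 + d2 = n \<and> det P \<noteq> 0"
    unfolding P_def
    by (rule append_cols_kernel_bases_nonsingular[OF poly_mat_carrier[OF AQ] poly_mat_carrier[OF AQ]
          poly_mat_coprime_kernels_disjoint[OF AQ \<open>coprime f g\<close>]
          poly_mat_coprime_kernels_span[OF AQ \<open>coprime f g\<close> fg] B1 basis1 B2 basis2])
  moreover have "A * P = P * block_diag_mat A1 A2"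
    using A A1 A2 B1 B2 by (simp add: P_def mult_append_cols append_cols_mult_block_diag_mat AB1 AB2)
  moreover have "P \<in> carrier_mat n n" using B1 B2 \<open>d1 + d2 = n \<and> det P \<noteq> 0\<close> by (auto simp: P_def)
  moreover have "poly_mat f (map_mat of_int A1) = 0\<^sub>m d1 d1"
    using intertwined_poly_mat_eq_0[OF A B1 A1 basis1 AB1] .
  moreover have "poly_mat g (map_mat of_int A2) = 0\<^sub>m d2 d2"
    using intertwined_poly_mat_eq_0[OF A B2 A2 basis2 AB2] .
  ultimately show ?thesis using A1 A2 by blast
qed


section \<open>Separating the roots of unity\<close>

lemma exists_factor_dvd_power_coprime:
  fixes p r :: "'a::field_gcd poly"
  assumes "p \<noteq> 0"
  shows "\<exists>f g. p = f * g \<and> f dvd r ^ degree p \<and> coprime g r"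
  using assms
proof (induct "degree p" arbitrary: p rule: less_induct)
  case less
  show ?case
  proof (cases "coprime p r")
    case True
    then show ?thesis by (intro exI[of _ 1] exI[of _ p]) auto
  next
    case False
    define d where "d = gcd p r"
    have "d dvd p" unfolding d_def by simp
    then obtain p' where p': "p = d * p'" by (rule dvdE)
    have "d \<noteq> 0" "p' \<noteq> 0" using p' less.prems by auto
    have "\<not> is_unit d" unfolding d_def is_unit_gcd using False .
    then have "degree d > 0" using is_unit_iff_degree[OF \<open>d \<noteq> 0\<close>] by auto
    moreover have deg: "degree p = degree d + degree p'"
      using p' \<open>d \<noteq> 0\<close> \<open>p' \<noteq> 0\<close> by (simp add: degree_mult_eq)
    ultimately have "degree p' < degree p" by simp
    from less.hyps[OF this \<open>p' \<noteq> 0\<close>] obtain f' g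
      where fg: "p' = f' * g" "f' dvd r ^ degree p'" "coprime g r" by blast
    have "d * f' dvd r * r ^ degree p'" using fg(2) unfolding d_def by (intro mult_dvd_mono) auto
    also have "\<dots> = r ^ Suc (degree p')" by simp
    also have "\<dots> dvd r ^ degree p"
      using deg \<open>degree d > 0\<close> by (intro le_imp_power_dvd) simp
    finally show ?thesis using p' fg by (intro exI[of _ "d * f'"] exI[of _ g]) (auto simp: mult.assoc)
  qed
qed

lemma roots_of_unity_common_exponent:
  assumes "finite S" and "\<forall>z \<in> S. root_of_unity z"
  shows "\<exists>N > 0. \<forall>z \<in> S. z ^ N = 1"
  using assms
proof (induct S rule: finite_induct)
  case empty
  then show ?case by (intro exI[of _ 1]) auto
next
  case (insert z S)
  obtain N where N: "N > 0" "\<forall>w \<in> S. w ^ N = 1" using insert by auto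
  obtain m where m: "m > 0" "z ^ m = 1" using insert.prems by (auto simp: root_of_unity_def)
  have "z ^ (N * m) = (z ^ m) ^ N" by (simp add: power_mult[symmetric] mult.commute)
  then have "z ^ (N * m) = 1" using m by simp
  moreover have "\<forall>w \<in> S. w ^ (N * m) = 1" using N by (simp add: power_mult)
  ultimately show ?case using N m by (intro exI[of _ "N * m"]) auto
qed

lemma coprime_no_common_complex_root:
  fixes p q :: "rat poly" and z :: complex
  assumes "coprime p q" and "poly (map_poly of_rat p) z = 0" and "poly (map_poly of_rat q) z = 0"
  shows False
proof -
  interpret h: map_poly_comm_ring_hom "of_rat :: rat \<Rightarrow> complex" ..
  obtain u v where "u * p + v * q = 1" using coprime_imp_bezout[OF assms(1)] by blast
  then have "poly (map_poly of_rat (u * p + v * q)) z = 1" by simp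
  then show False using assms(2,3) by (simp add: h.hom_add h.hom_mult)
qed

lemma rat_poly_split_roots_of_unity:
  fixes p :: "rat poly"
  assumes "p \<noteq> 0"
  shows "\<exists>f g. p = f * g \<and> coprime f g \<and>
    (\<forall>z::complex. poly (map_poly of_rat f) z = 0 \<longrightarrow> root_of_unity z) \<and>
    (\<forall>z::complex. poly (map_poly of_rat g) z = 0 \<longrightarrow> \<not> root_of_unity z)"
proof -
  interpret h: map_poly_comm_ring_hom "of_rat :: rat \<Rightarrow> complex" ..
  define S where "S = {z. poly (map_poly (of_rat :: rat \<Rightarrow> complex) p) z = 0 \<and> root_of_unity z}"
  have "map_poly (of_rat :: rat \<Rightarrow> complex) p \<noteq> 0"
  proof
    assume "map_poly (of_rat :: rat \<Rightarrow> complex) p = 0"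
    then have "coeff (map_poly (of_rat :: rat \<Rightarrow> complex) p) (degree p) = 0" by simp
    then show False using assms by (simp add: coeff_map_poly)
  qed
  moreover have "S \<subseteq> {z. poly (map_poly of_rat p) z = 0}" by (auto simp: S_def)
  ultimately have "finite S" using poly_roots_finite finite_subset by blast
  moreover have "\<forall>z \<in> S. root_of_unity z" by (simp add: S_def)
  ultimately obtain N where N: "N > 0" "\<forall>z \<in> S. z ^ N = 1"
    using roots_of_unity_common_exponent by blast
  define r :: "rat poly" where "r = monom 1 N - 1"
  have root_r: "poly (map_poly of_rat r) z = z ^ N - 1" for z :: complex
    by (simp add: r_def h.hom_minus poly_monom)
  obtain f g where fg: "p = f * g" "f dvd r ^ degree p" "coprime g r"
    using exists_factor_dvd_power_coprime[OF assms] by blast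
  have "coprime g (r ^ degree p)" using fg(3) by simp
  then have "coprime g f" by (rule coprime_divisors[OF dvd_refl fg(2)])
  then have "coprime f g" by (simp add: coprime_commute)
  moreover have "root_of_unity z" if "poly (map_poly of_rat f) z = 0" for z :: complex
  proof -
    obtain k where "r ^ degree p = f * k" using fg(2) by (auto elim: dvdE)
    then have "poly (map_poly of_rat (r ^ degree p)) z = 0" using that by (simp add: h.hom_mult)
    then have "poly (map_poly of_rat r) z ^ degree p = 0" by (simp add: h.hom_power poly_power)
    then show ?thesis using N(1) by (auto simp: root_r root_of_unity_def)
  qed
  moreover have "\<not> root_of_unity z" if "poly (map_poly of_rat g) z = 0" for z :: complex
  proof
    assume "root_of_unity z"
    then have "z \<in> S" using that fg(1) by (simp add: S_def h.hom_mult)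
    then have "poly (map_poly of_rat r) z = 0" using N(2) root_r by simp
    then show False using coprime_no_common_complex_root[OF fg(3) that] by blast
  qed
  ultimately show ?thesis using fg(1) by blast
qed

lemma int_eigenvalue_poly_root:
  assumes A: "A \<in> carrier_mat n n" and p: "poly_mat p (map_mat rat_of_int A) = 0\<^sub>m n n"
    and "int_eigenvalue A z"
  shows "poly (map_poly of_rat p) z = 0"
proof (rule poly_mat_eq_0_eigenvalue_root)
  show AC: "map_mat complex_of_int A \<in> carrier_mat n n" using A by simp
  show "eigenvalue (map_mat complex_of_int A) z" using \<open>int_eigenvalue A z\<close> by (simp add: int_eigenvalue_def)
  have "map_mat complex_of_rat (map_mat rat_of_int A) = map_mat complex_of_int A" by (intro eq_matI) auto
  moreover have "map_mat complex_of_rat (poly_mat p (map_mat rat_of_int A)) =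
      poly_mat (map_poly of_rat p) (map_mat complex_of_rat (map_mat rat_of_int A))"
    using A by (intro of_rat_hom.poly_mat_hom) simp
  ultimately have "poly_mat (map_poly of_rat p) (map_mat complex_of_int A) =
      map_mat complex_of_rat (poly_mat p (map_mat rat_of_int A))" by simp
  also have "\<dots> = 0\<^sub>m n n" unfolding p by (intro eq_matI) auto
  finally show "poly_mat (map_poly of_rat p) (map_mat complex_of_int A) = 0\<^sub>m n n" .
qed

lemma int_eigenvalue_nonzero:
  assumes A: "A \<in> carrier_mat n n" and "det A \<noteq> 0" and "int_eigenvalue A z"
  shows "z \<noteq> 0"
proof
  assume "z = 0"
  obtain v where v: "v \<in> carrier_vec n" "v \<noteq> 0\<^sub>v n" "map_mat complex_of_int A *\<^sub>v v = z \<cdot>\<^sub>v v"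
    using assms(3) A by (auto simp: int_eigenvalue_def eigenvalue_def eigenvector_def)
  moreover have "0 \<cdot>\<^sub>v v = 0\<^sub>v n" using v(1) by (intro eq_vecI) auto
  ultimately have "det (map_mat complex_of_int A) = 0"
    using det_0_iff_vec_prod_zero[of "map_mat complex_of_int A" n] A \<open>z = 0\<close> by auto
  then show False using \<open>det A \<noteq> 0\<close> by (simp add: of_int_hom.hom_det)
qed

theorem int_mat_root_of_unity_positive_decomposition:
  fixes A :: "int mat"
  assumes A: "A \<in> carrier_mat n n" and "det A \<noteq> 0"
  shows "\<exists>d1 d2 A1 A2 P. d1 + d2 = n \<and> A1 \<in> carrier_mat d1 d1 \<and>
    (\<forall>z. int_eigenvalue A1 z \<longrightarrow> root_of_unity z) \<and> A2 \<in> carrier_mat d2 d2 \<and> positive_mat A2 \<and>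
    P \<in> carrier_mat n n \<and> det P \<noteq> 0 \<and> A * P = P * block_diag_mat A1 A2"
proof -
  obtain p where "p \<noteq> 0" and p: "poly_mat p (map_mat rat_of_int A) = 0\<^sub>m n n"
    using poly_mat_annihilator_exists[of "map_mat rat_of_int A" n] A by auto
  obtain f g where fg: "p = f * g" "coprime f g"
    and f: "\<forall>z::complex. poly (map_poly of_rat f) z = 0 \<longrightarrow> root_of_unity z"
    and g: "\<forall>z::complex. poly (map_poly of_rat g) z = 0 \<longrightarrow> \<not> root_of_unity z"
    using rat_poly_split_roots_of_unity[OF \<open>p \<noteq> 0\<close>] by blast
  obtain d1 d2 A1 A2 P where d: "d1 + d2 = n" and A1: "A1 \<in> carrier_mat d1 d1" and A2: "A2 \<in> carrier_mat d2 d2"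
    and P: "P \<in> carrier_mat n n" "det P \<noteq> 0" and AP: "A * P = P * block_diag_mat A1 A2"
    and fA1: "poly_mat f (map_mat of_int A1) = 0\<^sub>m d1 d1" and gA2: "poly_mat g (map_mat of_int A2) = 0\<^sub>m d2 d2"
    using int_mat_coprime_decomposition[OF A fg(2) p[unfolded fg(1)]] by blast
  have D: "block_diag_mat A1 A2 \<in> carrier_mat n n" using block_diag_mat_carrier[OF A1 A2] d by simp
  have "det A * det P = det (P * block_diag_mat A1 A2)" by (simp add: det_mult[OF A P(1), symmetric] AP)
  also have "\<dots> = det P * (det A1 * det A2)" by (simp add: det_mult[OF P(1) D] det_block_diag_mat[OF A1 A2])
  finally have "det A * det P = det P * (det A1 * det A2)" .
  then have "det A2 \<noteq> 0" using \<open>det A \<noteq> 0\<close> P(2) by auto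
  have "\<forall>z. int_eigenvalue A1 z \<longrightarrow> root_of_unity z"
    using f int_eigenvalue_poly_root[OF A1 fA1] by blast
  moreover have "positive_mat A2"
    unfolding positive_mat_def
    using g int_eigenvalue_poly_root[OF A2 gA2] int_eigenvalue_nonzero[OF A2 \<open>det A2 \<noteq> 0\<close>] by blast
  ultimately show ?thesis using d A1 A2 P AP by blast
qed

theorem lemma2p6:
  fixes A :: "int mat" and n :: nat
  assumes "n \<ge> 1" and "A \<in> carrier_mat n n" and "det A \<noteq> 0"
  shows "\<exists>n1 n2 (A1 :: int mat) (A2 :: int mat) (P :: int mat).
           n1 + n2 = n \<and>
           A1 \<in> carrier_mat n1 n1 \<and> (\<forall>z. int_eigenvalue A1 z \<longrightarrow> root_of_unity z) \<and>
           A2 \<in> carrier_mat n2 n2 \<and> positive_mat A2 \<and>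
           P \<in> carrier_mat n n \<and> det P \<noteq> 0 \<and>
           (\<forall>u \<in> (Gm n :: 'k :: {alg_closed_field, field_char_0} vec set).
              phi A (phi P u) = phi P (phi A1 (vec_first u n1) @\<^sub>v phi A2 (vec_last u n2)))"
proof -
  obtain n1 n2 A1 A2 P where n: "n1 + n2 = n" and A1: "A1 \<in> carrier_mat n1 n1"
    and A1_unipotent: "\<forall>z. int_eigenvalue A1 z \<longrightarrow> root_of_unity z" and A2: "A2 \<in> carrier_mat n2 n2"
    and A2_positive: "positive_mat A2" and P: "P \<in> carrier_mat n n" "det P \<noteq> 0"
    and AP: "A * P = P * block_diag_mat A1 A2"
    using int_mat_root_of_unity_positive_decomposition[OF assms(2,3)] by blast
  have "phi A (phi P u) = phi P (phi A1 (vec_first u n1) @\<^sub>v phi A2 (vec_last u n2))"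
    if "u \<in> (Gm n :: 'k vec set)" for u
  proof -
    have u: "u \<in> carrier_vec n" "\<forall>i < n. u $ i \<noteq> 0" using that by (auto simp: Gm_def)
    have D: "block_diag_mat A1 A2 \<in> carrier_mat n n" using block_diag_mat_carrier[OF A1 A2] n by simp
    have "phi A (phi P u) = phi (P * block_diag_mat A1 A2) u"
      unfolding AP[symmetric] by (rule phi_mult[OF assms(2) P(1) u])
    also have "\<dots> = phi P (phi (block_diag_mat A1 A2) u)" by (rule phi_mult[OF P(1) D u, symmetric])
    also have "phi (block_diag_mat A1 A2) u = phi A1 (vec_first u n1) @\<^sub>v phi A2 (vec_last u n2)"
      using A1 A2 u n by (intro phi_block_diag_mat) auto
    finally show ?thesis .
  qed
  then show ?thesis using n A1 A1_unipotent A2 A2_positive P by blast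
qed

end
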